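(* Let $2\leq m<n$ be integers. Then $$\textup{res}(\Psi_m(x),\Psi_n(x))=\begin{cases}p^{\varphi(m)}&\text{if } n/m=p^\alpha \text{ for some prime } p \text{ and some positive integer } \alpha;\\ 1&\text{otherwise}.\end{cases}$$
   Context: The Fibonacci polynomials are defined by $F_1(x)=1$, $F_2(x)=x$, and $F_n(x)=xF_{n-1}(x)+F_{n-2}(x)$ for $n\geq 3$. For $n\geq 2$, the $n$-th fibotomic polynomial $\Psi_n(x)\in\mathbb{Z}[x]$ is the product of the monic irreducible factors of $F_n(x)$ which are not factors of $F_k(x)$ for any $k<n$; also $\Psi_1(x)=1$. For $n\ge2$, $\Psi_n$ is monic of degree $\varphi(n)$ (Euler's totient). For monic polynomials $f,g$ with roots $a_1,\dots,a_r$ and $b_1,\dots,b_s$, the resultant is $\textup{res}(f,g)=\prod_{i,j}(a_i-b_j)$. *)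

theory Defs
  imports "HOL-Computational_Algebra.Computational_Algebra" "Subresultants.Resultant_Prelim" "HOL-Number_Theory.Totient"
begin

fun fib_poly :: "nat \<Rightarrow> int poly" where
  "fib_poly 0 = 0"
| "fib_poly (Suc 0) = 1"
| "fib_poly (Suc (Suc n)) = [:0, 1:] * fib_poly (Suc n) + fib_poly n"

definition fibotomic :: "nat \<Rightarrow> int poly" where
  "fibotomic n = (if n \<le> 1 then 1 else
     \<Prod>{p :: int poly. monic p \<and> irreducible p \<and> p dvd fib_poly n \<and>
          (\<forall>k. 1 \<le> k \<and> k < n \<longrightarrow> \<not> p dvd fib_poly k)})"

end

theory Submission
  imports Defs "Subresultants.Subresultant" "Subresultants.Subresultant_Gcd"
begin

text \<open>Over \<open>\<complex>\<close>, \<open>F\<^sub>N\<close> has the simple roots \<open>2i cos (k\<pi>/N)\<close> (\<open>0 < k < N\<close>) and \<open>\<Psi>\<^sub>N\<close> keeps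
  those with \<open>k\<close> prime to \<open>N\<close>, so \<open>F\<^sub>N = \<Prod>\<^sub>d\<^sub>|\<^sub>N \<Psi>\<^sub>d\<close> and \<open>res(\<Psi>\<^sub>m, \<Psi>\<^sub>n)\<close> is the product of the
  root differences. That product is a non-negative real, as \<open>(j, k) \<mapsto> (m - j, n - k)\<close> pairs
  each factor with its negative; so only its modulus matters. From
  \<open>F\<^sub>N(2i cos t) = i\<^sup>N\<^sup>-\<^sup>1 sin (Nt) / sin t\<close>, the product of \<open>|res(\<Psi>\<^sub>m, \<Psi>\<^sub>d)|\<close> over the divisors
  \<open>d\<close> of \<open>N\<close> depends only on \<open>N mod m\<close> if \<open>m \<nmid> N\<close>, and for \<open>N = qm\<close> the product over the
  divisors not dividing \<open>m\<close> is \<open>q\<^sup>\<phi>\<^sup>(\<^sup>m\<^sup>)\<close>. The claimed values satisfy the same two identities,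
  since \<open>\<Prod>\<^sub>e\<^sub>|\<^sub>q exp (\<Lambda> e) = q\<close>, and strong induction on \<open>n\<close> concludes.\<close>

section \<open>Resultants over \<open>\<complex>\<close> via roots\<close>

lemma prod_mset_linear_factors_poly:
  "poly (\<Prod>a\<in>#A. [:-a, 1:]) x = (\<Prod>a\<in>#A. x - (a :: 'a :: comm_ring_1))"
  by (induction A) (auto simp: algebra_simps)

lemma poly_eq_lead_coeff_prod_proots:
  "(f :: complex poly) \<noteq> 0 \<Longrightarrow> poly f x = lead_coeff f * (\<Prod>a\<in>#proots f. x - a)"
  by (subst (1) complex_poly_decompose_multiset[symmetric])
     (simp only: poly_smult prod_mset_linear_factors_poly)

lemma prod_mset_diff_commute:
  "(\<Prod>b\<in>#B. b - a) = (-1) ^ size B * (\<Prod>b\<in>#B. a - (b :: 'a :: comm_ring_1))"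
  by (induction B) (auto simp: algebra_simps)

text \<open>The fundamental lemmas of subresultant theory reduce \<open>resultant f g\<close> to
  \<open>resultant f (g mod f)\<close>, and \<open>g\<close>, \<open>g mod f\<close> agree on the roots of \<open>f\<close>.\<close>
lemma resultant_prod_proots_mod_step:
  fixes f g :: "complex poly"
  assumes f0: "f \<noteq> 0" and df: "degree f > 0" and dfg: "degree f \<le> degree g"
    and IH: "\<And>r. degree r < degree f \<Longrightarrow>
               resultant f r = lead_coeff f ^ degree r * (\<Prod>a\<in>#proots f. poly r a)"
  shows "resultant f g = lead_coeff f ^ degree g * (\<Prod>a\<in>#proots f. poly g a)"
proof -
  define r where "r = g mod f"
  have eq: "g + (- (g div f)) * f = r"
    unfolding r_def using minus_div_mult_eq_mod[of g f] by simp
  have dr: "degree r < degree f"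
    using df f0 degree_mod_less[of f g] unfolding r_def by (cases "g mod f = 0") auto
  have ch: "degree r < degree f \<or> r = 0 \<and> g \<noteq> 0 \<and> f \<noteq> 0" using dr by auto
  have roots_r: "(\<Prod>a\<in>#proots f. poly r a) = (\<Prod>a\<in>#proots f. poly g a)"
  proof (rule arg_cong[where f = prod_mset], rule image_mset_cong)
    fix a assume "a \<in># proots f"
    hence "poly f a = 0" using f0 by simp
    thus "poly r a = poly g a" unfolding r_def by (simp add: poly_mod)
  qed
  have sign: "(-1 :: complex) ^ (degree f * degree g) * (-1) ^ (degree g * degree f) = 1"
    by (simp add: mult.commute[of "degree g"] power_mult_distrib[symmetric])
  have "resultant g f = (-1) ^ (degree g * degree f) * lead_coeff f ^ degree g
          * (\<Prod>a\<in>#proots f. poly r a)"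
  proof (cases "degree r > 0")
    case True
    from arg_cong[OF BT_lemma_1_12[OF eq dfg ch True], of "\<lambda>x. coeff x 0"]
    have "resultant g f = (-1) ^ (degree g * degree f) * lead_coeff f ^ (degree g - degree r)
            * resultant f r"
      by (simp add: coeff_subresultant_0_0_resultant)
    also have "resultant f r = lead_coeff f ^ degree r * (\<Prod>a\<in>#proots f. poly r a)"
      using IH[OF dr] .
    finally show ?thesis
      using dr dfg by (simp add: mult.assoc power_add[symmetric])
  next
    case False
    then obtain c where rc: "r = [:c:]" by (metis degree_eq_zeroE gr0I)
    have ch2: "degree r < degree f \<or> r \<noteq> 0" using dr by auto
    from arg_cong[OF BT_lemma_1_13[OF eq dfg ch ch2], of "\<lambda>x. coeff x 0"] rc
    have "resultant g f = (-1) ^ (degree g * degree f) * lead_coeff f ^ degree g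
            * (c ^ (degree f - 1) * c)"
      by (simp add: coeff_subresultant_0_0_resultant mult.assoc)
    also have "c ^ (degree f - 1) * c = (\<Prod>a\<in>#proots f. poly r a)"
      using df by (simp add: rc size_proots_complex power_Suc2[symmetric])
    finally show ?thesis .
  qed
  hence "resultant f g = ((-1) ^ (degree f * degree g) * (-1) ^ (degree g * degree f))
           * lead_coeff f ^ degree g * (\<Prod>a\<in>#proots f. poly g a)"
    using resultant_swap[of f g] roots_r by (simp only: mult.assoc)
  thus ?thesis unfolding sign by simp
qed

lemma prod_proots_poly_swap:
  fixes f g :: "complex poly"
  assumes "f \<noteq> 0" "g \<noteq> 0"
  shows "lead_coeff g ^ degree f * (\<Prod>b\<in>#proots g. poly f b)
           = (-1) ^ (degree f * degree g) * (lead_coeff f ^ degree g * (\<Prod>a\<in>#proots f. poly g a))"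
proof -
  let ?D = "\<Prod>a\<in>#proots f. \<Prod>b\<in>#proots g. a - b"
  have "(\<Prod>b\<in>#proots g. poly f b)
      = lead_coeff f ^ degree g * (\<Prod>b\<in>#proots g. \<Prod>a\<in>#proots f. b - a)"
    using assms(1)
    by (simp add: poly_eq_lead_coeff_prod_proots prod_mset.distrib size_proots_complex)
  also have "(\<Prod>b\<in>#proots g. \<Prod>a\<in>#proots f. b - a) = (-1) ^ (degree f * degree g) * ?D"
    by (subst prod_mset.swap)
       (simp add: prod_mset_diff_commute prod_mset.distrib size_proots_complex
          power_mult[symmetric] mult.commute)
  moreover have "(\<Prod>a\<in>#proots f. poly g a) = lead_coeff g ^ degree f * ?D"
    using assms(2)
    by (simp add: poly_eq_lead_coeff_prod_proots prod_mset.distrib size_proots_complex)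
  ultimately show ?thesis by (simp add: mult_ac)
qed

lemma resultant_eq_prod_proots:
  fixes f g :: "complex poly"
  assumes "f \<noteq> 0"
  shows "resultant f g = lead_coeff f ^ degree g * (\<Prod>a\<in>#proots f. poly g a)"
  using assms
proof (induction "degree f + degree g" arbitrary: f g rule: less_induct)
  case (less f g)
  consider "degree f = 0" | "degree g = 0" | "0 < degree f" "degree f \<le> degree g"
    | "0 < degree g" "degree g < degree f"
    by linarith
  then show ?case
  proof cases
    case 1
    then obtain c where "f = [:c:]" by (metis degree_eq_zeroE)
    thus ?thesis by simp
  next
    case 2
    then obtain c where g: "g = [:c:]" by (metis degree_eq_zeroE)
    have "poly [:c:] = (\<lambda>_. c)" by auto
    thus ?thesis unfolding g by (simp add: size_proots_complex)
  next
    case 3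
    show ?thesis
      by (rule resultant_prod_proots_mod_step[OF less.prems])
         (use 3 in \<open>auto intro!: less.hyps less.prems\<close>)
  next
    case 4
    have g0: "g \<noteq> 0" using 4 by auto
    have "resultant g f = lead_coeff g ^ degree f * (\<Prod>b\<in>#proots g. poly f b)"
      by (rule resultant_prod_proots_mod_step[OF g0]) (use 4 in \<open>auto intro!: less.hyps g0\<close>)
    also have "\<dots> = (-1) ^ (degree f * degree g)
                     * (lead_coeff f ^ degree g * (\<Prod>a\<in>#proots f. poly g a))"
      by (rule prod_proots_poly_swap[OF less.prems g0])
    finally show ?thesis
      by (simp add: resultant_swap[of f g] power_mult_distrib[symmetric])
  qed
qed

section \<open>Fibonacci polynomials and their complex roots\<close>

lemma fib_poly_degree_monic:
  assumes "0 < n"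
  shows "degree (fib_poly n) = n - 1 \<and> lead_coeff (fib_poly n) = 1"
  using assms
proof (induction n rule: fib_poly.induct)
  case (3 n)
  have "degree (fib_poly (Suc n)) = n" "lead_coeff (fib_poly (Suc n)) = 1"
    using "3.IH"(1) by auto
  hence x: "degree ([:0, 1:] * fib_poly (Suc n)) = Suc n"
           "lead_coeff ([:0, 1:] * fib_poly (Suc n)) = 1"
    by (auto simp: degree_mult_eq lead_coeff_mult simp del: fib_poly.simps)
  have "degree (fib_poly n) < Suc n"
    using "3.IH"(2) by (cases n) auto
  thus ?case
    using x unfolding fib_poly.simps(3)
    by (simp add: degree_add_eq_left lead_coeff_add_le coeff_eq_0 del: fib_poly.simps)
qed auto

lemma fib_poly_nonzero: "0 < n \<Longrightarrow> fib_poly n \<noteq> 0"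
  using fib_poly_degree_monic[of n] by auto

lemma fib_poly_add:
  "fib_poly (a + Suc b) = fib_poly (Suc a) * fib_poly (Suc b) + fib_poly a * fib_poly b"
proof (induction b rule: fib_poly.induct)
  case (3 b)
  have "fib_poly (a + Suc (Suc (Suc b)))
        = [:0, 1:] * fib_poly (a + Suc (Suc b)) + fib_poly (a + Suc b)"
    by simp
  also have "\<dots> = fib_poly (Suc a) * fib_poly (Suc (Suc (Suc b)))
                  + fib_poly a * fib_poly (Suc (Suc b))"
    unfolding "3.IH" by (simp add: algebra_simps)
  finally show ?case .
qed simp_all

definition cfib_poly :: "nat \<Rightarrow> complex poly" where
  "cfib_poly n = of_int_poly (fib_poly n)"

lemma cfib_poly_simps:
  "cfib_poly 0 = 0" "cfib_poly (Suc 0) = 1"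
  "cfib_poly (Suc (Suc n)) = [:0, 1:] * cfib_poly (Suc n) + cfib_poly n"
  unfolding cfib_poly_def by (simp_all add: hom_distribs)

lemma cfib_poly_nonzero: "0 < n \<Longrightarrow> cfib_poly n \<noteq> 0"
  unfolding cfib_poly_def using fib_poly_nonzero by simp

lemma cfib_poly_degree_monic:
  "0 < n \<Longrightarrow> degree (cfib_poly n) = n - 1 \<and> lead_coeff (cfib_poly n) = 1"
proof -
  assume "0 < n"
  hence "degree (fib_poly n) = n - 1" "lead_coeff (fib_poly n) = 1"
    using fib_poly_degree_monic by blast+
  thus ?thesis unfolding cfib_poly_def by (simp add: degree_map_poly coeff_map_poly)
qed

lemma cfib_poly_add:
  "cfib_poly (a + Suc b) = cfib_poly (Suc a) * cfib_poly (Suc b) + cfib_poly a * cfib_poly b"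
  unfolding cfib_poly_def fib_poly_add by (simp add: hom_distribs)

lemma poly_cfib_poly_cos:
  "\<i> * poly (cfib_poly n) (\<i> * of_real (2 * cos t)) * of_real (sin t)
     = \<i> ^ n * of_real (sin (real n * t))"
proof (induction n rule: fib_poly.induct)
  case (3 n)
  have trig: "sin (real (Suc (Suc n)) * t) = 2 * cos t * sin (real (Suc n) * t) - sin (real n * t)"
    using sin_add[of "real (Suc n) * t" t] sin_diff[of "real (Suc n) * t" t]
    by (simp add: algebra_simps)
  let ?z = "\<i> * of_real (2 * cos t)"
  have "\<i> * poly (cfib_poly (Suc (Suc n))) ?z * of_real (sin t)
      = ?z * (\<i> * poly (cfib_poly (Suc n)) ?z * of_real (sin t))
        + \<i> * poly (cfib_poly n) ?z * of_real (sin t)"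
    by (simp add: cfib_poly_simps algebra_simps)
  also have "\<dots> = ?z * (\<i> ^ Suc n * of_real (sin (real (Suc n) * t)))
        + \<i> ^ n * of_real (sin (real n * t))"
    unfolding "3.IH" ..
  also have "\<dots> = \<i> ^ Suc (Suc n) * of_real (sin (real (Suc (Suc n)) * t))"
    unfolding trig by (simp add: algebra_simps)
  finally show ?case .
qed (simp_all add: cfib_poly_simps)

definition fib_root :: "nat \<Rightarrow> nat \<Rightarrow> complex" where
  "fib_root n k = \<i> * of_real (2 * cos (real k * pi / real n))"

lemma sin_pos_fraction_pi: "0 < k \<Longrightarrow> k < n \<Longrightarrow> 0 < sin (real k * pi / real n)"
  by (rule sin_gt_zero) (auto simp: field_simps)

lemma poly_cfib_poly_fib_root:
  "poly (cfib_poly n) (fib_root m k) * of_real (sin (real k * pi / real m))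
     = \<i> ^ (n - 1) * of_real (sin (real n * (real k * pi / real m)))"
proof (cases n)
  case (Suc n')
  have "\<i> * (poly (cfib_poly n) (fib_root m k) * of_real (sin (real k * pi / real m)))
      = \<i> * (\<i> ^ n' * of_real (sin (real n * (real k * pi / real m))))"
    using poly_cfib_poly_cos[of n "real k * pi / real m"]
    unfolding fib_root_def Suc power_Suc by (simp only: mult.assoc)
  thus ?thesis using Suc by simp
qed (simp add: cfib_poly_simps)

lemma cfib_poly_fib_root:
  assumes "0 < k" "k < n"
  shows "poly (cfib_poly n) (fib_root n k) = 0"
proof -
  have "real n * (real k * pi / real n) = real k * pi" using assms by simp
  hence "poly (cfib_poly n) (fib_root n k) * of_real (sin (real k * pi / real n)) = 0"
    using poly_cfib_poly_fib_root[of n n k] by simp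
  moreover have "sin (real k * pi / real n) \<noteq> 0" using sin_pos_fraction_pi[OF assms] by simp
  ultimately show ?thesis by simp
qed

lemma fib_root_eq_iff:
  assumes "k \<le> n" "k' \<le> n'" "0 < n" "0 < n'"
  shows "fib_root n k = fib_root n' k' \<longleftrightarrow> k * n' = k' * n"
proof -
  have "fib_root n k = fib_root n' k' \<longleftrightarrow> cos (real k * pi / real n) = cos (real k' * pi / real n')"
    unfolding fib_root_def by simp
  also have "\<dots> \<longleftrightarrow> real k * pi / real n = real k' * pi / real n'"
  proof
    assume c: "cos (real k * pi / real n) = cos (real k' * pi / real n')"
    have "real k * pi / real n \<le> pi" "real k' * pi / real n' \<le> pi"
      using assms by (simp_all add: field_simps)
    thus "real k * pi / real n = real k' * pi / real n'"
      by (intro cos_inj_pi[OF _ _ _ _ c]) auto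
  qed simp
  also have "\<dots> \<longleftrightarrow> real k * real n' = real k' * real n"
    using assms by (simp add: field_simps)
  also have "\<dots> \<longleftrightarrow> k * n' = k' * n"
    by (simp flip: of_nat_mult)
  finally show ?thesis .
qed

lemma inj_on_fib_root: "0 < n \<Longrightarrow> inj_on (fib_root n) {0<..<n}"
  by (intro inj_onI) (auto simp: fib_root_eq_iff)

lemma fib_root_scale:
  assumes "N = d * e" "0 < N" "j \<le> d"
  shows "fib_root N (j * e) = fib_root d j"
proof -
  have "j * e \<le> d * e" using assms by simp
  thus ?thesis using assms by (subst fib_root_eq_iff) auto
qed

lemma fib_root_reflect: "j \<le> m \<Longrightarrow> 0 < m \<Longrightarrow> fib_root m (m - j) = - fib_root m j"
proof -
  assume "j \<le> m" "0 < m"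
  hence "real (m - j) * pi / real m = pi - real j * pi / real m"
    by (simp add: of_nat_diff field_simps)
  thus ?thesis unfolding fib_root_def by (simp add: cos_diff)
qed

lemma cfib_poly_eq_prod_fib_roots:
  assumes "0 < n"
  shows "cfib_poly n = (\<Prod>k\<in>{0<..<n}. [:- fib_root n k, 1:])"
proof (rule ccontr)
  define Q where "Q = (\<Prod>k\<in>{0<..<n}. [:- fib_root n k, 1:])"
  define D where "D = cfib_poly n - Q"
  assume "cfib_poly n \<noteq> Q"
  hence D0: "D \<noteq> 0" unfolding D_def by simp
  have "lead_coeff Q = 1" unfolding Q_def by (simp add: lead_coeff_prod)
  moreover have "degree Q = n - 1" unfolding Q_def by (simp add: degree_prod_sum_eq)
  moreover have "degree (cfib_poly n) = n - 1" "lead_coeff (cfib_poly n) = 1"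
    using cfib_poly_degree_monic[OF assms] by auto
  ultimately have "degree D \<le> n - 1" "coeff D (n - 1) = 0"
    unfolding D_def by (metis degree_diff_le le_refl, simp)
  hence "degree D < n - 1"
    using D0 by (metis le_neq_implies_less leading_coeff_0_iff)
  moreover have "fib_root n ` {0<..<n} \<subseteq> {x. poly D x = 0}"
  proof safe
    fix k :: nat assume k: "k \<in> {0<..<n}"
    hence "poly Q (fib_root n k) = 0"
      unfolding Q_def poly_prod by (auto simp: prod_zero_iff)
    thus "poly D (fib_root n k) = 0"
      using cfib_poly_fib_root[of k n] k unfolding D_def by simp
  qed
  hence "card (fib_root n ` {0<..<n}) \<le> card {x. poly D x = 0}"
    by (intro card_mono poly_roots_finite D0)
  hence "n - 1 \<le> card {x. poly D x = 0}"
    using card_image[OF inj_on_fib_root[OF assms]] by simp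
  ultimately show False using card_poly_roots_bound[OF D0] by simp
qed

lemma rsquarefree_iff_order_le_1: "rsquarefree p \<longleftrightarrow> p \<noteq> 0 \<and> (\<forall>a. order a p \<le> 1)"
  unfolding rsquarefree_def by (simp add: le_Suc_eq)

lemma rsquarefree_prod_linear_factors:
  fixes r :: "'b \<Rightarrow> 'a :: idom"
  assumes "finite K" "inj_on r K"
  shows "rsquarefree (\<Prod>k\<in>K. [:- r k, 1:])"
  using assms
proof (induction K rule: finite_induct)
  case (insert k K)
  let ?P = "\<Prod>k\<in>K. [:- r k, 1:]"
  have P0: "?P \<noteq> 0" and IH: "order a ?P \<le> 1" for a
    using insert by (simp_all add: rsquarefree_iff_order_le_1)
  have "poly ?P (r k) \<noteq> 0"
    using insert by (auto simp: poly_prod prod_zero_iff)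
  hence root: "order (r k) ?P = 0" by (rule order_0I)
  have lin: "order a [:- r k, 1:] = (if a = r k then 1 else 0)" for a
    using order_power_n_n[of "r k" 1] by (auto intro: order_0I)
  have prod0: "[:- r k, 1:] * ?P \<noteq> 0"
    using P0 by (metis mult_eq_0_iff pCons_eq_0_iff one_neq_zero)
  hence "order a ([:- r k, 1:] * ?P) = order a [:- r k, 1:] + order a ?P" for a
    by (rule order_mult)
  hence "order a ([:- r k, 1:] * ?P) \<le> 1" for a
    using IH[of a] root lin[of a] by (cases "a = r k") auto
  thus ?case using insert prod0 by (simp add: rsquarefree_iff_order_le_1 del: mult_pCons_left)
qed (simp add: rsquarefree_def)

lemma rsquarefree_dvd:
  assumes "rsquarefree p" "q dvd p"
  shows "rsquarefree q"
  using assms dvd_imp_order_le[of p q]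
  by (auto simp: rsquarefree_iff_order_le_1 intro: le_trans)

lemma rsquarefree_cfib_poly: "0 < n \<Longrightarrow> rsquarefree (cfib_poly n)"
  using rsquarefree_prod_linear_factors[OF _ inj_on_fib_root]
  by (simp add: cfib_poly_eq_prod_fib_roots)

lemma poly_cfib_poly_eq_0_iff:
  assumes "0 < n"
  shows "poly (cfib_poly n) x = 0 \<longleftrightarrow> (\<exists>k. 0 < k \<and> k < n \<and> x = fib_root n k)"
  unfolding cfib_poly_eq_prod_fib_roots[OF assms] poly_prod by (auto simp: prod_zero_iff)

section \<open>Fibotomic polynomials over \<open>\<complex>\<close>\<close>

lemma normalize_monic_int_poly: "lead_coeff (p :: int poly) = 1 \<Longrightarrow> normalize p = p"
  using normalize_mult_unit_factor[of p] by (simp add: unit_factor_poly_def)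

lemma prime_monic_irreducible_int_poly: "monic (p :: int poly) \<Longrightarrow> irreducible p \<Longrightarrow> prime p"
  by (simp add: prime_def normalize_monic_int_poly irreducible_imp_prime_elem)

lemma monic_prime_factor_int_poly:
  assumes "monic (x :: int poly)" "p \<in> prime_factors x"
  shows "monic p"
proof -
  have "prime p" "p dvd x" using assms by (auto simp: in_prime_factors_iff)
  then obtain c where "x = p * c" by (elim dvdE)
  hence lc: "lead_coeff p * lead_coeff c = 1" using assms(1) by (simp add: lead_coeff_mult)
  have "unit_factor p = 1"
    using \<open>prime p\<close> unit_factor_normalize[of p] by (auto simp: prime_def)
  hence "lead_coeff p > 0" by (simp add: unit_factor_poly_def sgn_1_pos)
  with lc show ?thesis by (simp add: pos_zmult_eq_1_iff)
qed

lemma prod_primes_dvd: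
  fixes x :: "'a :: factorial_semiring_gcd"
  assumes "finite A" "\<And>p. p \<in> A \<Longrightarrow> prime p \<and> p dvd x"
  shows "\<Prod>A dvd x"
  using assms
proof (induction A rule: finite_induct)
  case (insert p A)
  have p: "prime p" "p dvd x" using insert by auto
  have "\<not> p dvd \<Prod>A"
  proof
    assume "p dvd \<Prod>A"
    then obtain a where "a \<in> A" "p dvd a" using prime_dvd_prod_iff[OF insert(1) p(1)] by auto
    thus False using primes_dvd_imp_eq[OF p(1)] insert by auto
  qed
  hence "coprime p (\<Prod>A)" by (rule prime_imp_coprime[OF p(1)])
  moreover have "\<Prod>A dvd x" using insert by auto
  ultimately show ?case using insert p by (simp add: divides_mult)
qed simp

lemma poly_eq_0_if_dvd:
  assumes "p dvd q" "poly p x = 0"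
  shows "poly q x = 0"
  using assms by (elim dvdE) simp

lemma dvd_of_common_complex_root:
  fixes p q :: "int poly"
  assumes irr: "irreducible p"
    and "poly (of_int_poly p) z = (0 :: complex)" "poly (of_int_poly q) z = 0"
  shows "p dvd q"
proof -
  have "p \<noteq> 0" using irr by auto
  hence p0: "(of_int_poly p :: complex poly) \<noteq> 0" by simp
  hence "z \<in># proots (of_int_poly p)" using assms(2) by simp
  hence "(\<Prod>a\<in>#proots (of_int_poly p). poly (of_int_poly q) a) = (0 :: complex)"
    using assms(3) by (auto simp: prod_mset_zero_iff)
  hence "resultant (of_int_poly p :: complex poly) (of_int_poly q) = 0"
    by (simp add: resultant_eq_prod_proots[OF p0])
  hence "resultant p q = 0" by (simp add: of_int_hom.resultant_hom)
  hence "\<not> is_unit (gcd p q)" by (auto simp: resultant_0_gcd is_unit_poly_iff)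
  moreover have "p dvd gcd p q \<or> is_unit (gcd p q)"
    using irreducibleD'[OF irr gcd_dvd1] .
  ultimately show ?thesis using gcd_dvd2 dvd_trans by blast
qed

lemma complex_root_of_prime_factor:
  fixes x :: "int poly"
  assumes "monic x" "poly (of_int_poly x) z = (0 :: complex)"
  shows "\<exists>p\<in>prime_factors x. poly (of_int_poly p) z = 0"
proof -
  have "x \<noteq> 0" using assms(1) by auto
  hence "normalize (\<Prod>\<^sub># (prime_factorization x)) = x"
    using prod_mset_prime_factorization_weak[of x] normalize_monic_int_poly[OF assms(1)] by argo
  hence "x dvd \<Prod>\<^sub># (prime_factorization x)"
    using dvd_normalize_iff[of x "\<Prod>\<^sub># (prime_factorization x)"] by simp
  hence "poly (of_int_poly (\<Prod>\<^sub># (prime_factorization x))) z = (0 :: complex)"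
    using poly_eq_0_if_dvd[OF of_int_poly_hom.hom_dvd assms(2)] by blast
  moreover have "poly (of_int_poly (\<Prod>\<^sub># M)) z = (\<Prod>p\<in>#M. poly (of_int_poly p) z)" for M
    by (induction M) (simp_all add: of_int_poly_hom.hom_mult)
  ultimately show ?thesis by (auto simp: prod_mset_zero_iff)
qed

definition primitive_indices :: "nat \<Rightarrow> nat set" where
  "primitive_indices n = {k. 0 < k \<and> k < n \<and> coprime k n}"

lemma finite_primitive_indices [simp]: "finite (primitive_indices n)"
  unfolding primitive_indices_def by (rule finite_subset[of _ "{..<n}"]) auto

lemma primitive_indices_eq_totatives: "2 \<le> n \<Longrightarrow> primitive_indices n = totatives n"
  unfolding primitive_indices_def totatives_def by (auto simp: order.order_iff_strict)

lemma card_primitive_indices: "2 \<le> n \<Longrightarrow> card (primitive_indices n) = totient n"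
  by (simp add: primitive_indices_eq_totatives totient_def)

definition cfibotomic :: "nat \<Rightarrow> complex poly" where
  "cfibotomic n = (\<Prod>k\<in>primitive_indices n. [:- fib_root n k, 1:])"

lemma poly_cfibotomic: "poly (cfibotomic n) x = (\<Prod>k\<in>primitive_indices n. x - fib_root n k)"
  unfolding cfibotomic_def poly_prod by simp

definition fibotomic_factors :: "nat \<Rightarrow> int poly set" where
  "fibotomic_factors n = {p. monic p \<and> irreducible p \<and> p dvd fib_poly n \<and>
     (\<forall>k. 1 \<le> k \<and> k < n \<longrightarrow> \<not> p dvd fib_poly k)}"

lemma fibotomic_eq_prod_factors: "2 \<le> n \<Longrightarrow> fibotomic n = \<Prod>(fibotomic_factors n)"
  unfolding fibotomic_def fibotomic_factors_def by simp

lemma prime_fibotomic_factor: "p \<in> fibotomic_factors n \<Longrightarrow> prime p"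
  unfolding fibotomic_factors_def by (simp add: prime_monic_irreducible_int_poly)

lemma finite_fibotomic_factors:
  assumes "0 < n"
  shows "finite (fibotomic_factors n)"
proof (rule finite_subset)
  show "fibotomic_factors n \<subseteq> prime_factors (fib_poly n)"
    using fib_poly_nonzero[OF assms] prime_fibotomic_factor
    by (auto simp: in_prime_factors_iff fibotomic_factors_def)
qed simp

lemma fibotomic_dvd_fib_poly: "2 \<le> n \<Longrightarrow> fibotomic n dvd fib_poly n"
  unfolding fibotomic_eq_prod_factors using finite_fibotomic_factors[of n] prime_fibotomic_factor
  by (intro prod_primes_dvd) (auto simp: fibotomic_factors_def)

lemma fib_root_imprimitive:
  assumes "0 < k" "k < n" "\<not> coprime k n"
  obtains d where "0 < d" "d < n" "poly (cfib_poly d) (fib_root n k) = 0"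
proof -
  define g where "g = gcd k n"
  obtain d where d: "n = g * d" using gcd_dvd2[of k n] unfolding g_def by (rule dvdE)
  obtain j where j: "k = g * j" using gcd_dvd1[of k n] unfolding g_def by (rule dvdE)
  have "g \<noteq> 1" "0 < g" using assms by (simp_all add: g_def coprime_iff_gcd_eq_1)
  hence "1 < g" by simp
  hence jd: "0 < j" "j < d" "0 < d" "d < n"
    using assms d j by (auto intro: gr0I)
  have "fib_root n k = fib_root d j"
    using jd assms by (subst fib_root_eq_iff) (auto simp: d j)
  thus ?thesis using that[of d] cfib_poly_fib_root[of j d] jd by simp
qed

lemma fib_root_primitive_not_root:
  assumes "k \<in> primitive_indices n" "0 < k'" "k' < n"
  shows "poly (cfib_poly k') (fib_root n k) \<noteq> 0"
proof
  assume "poly (cfib_poly k') (fib_root n k) = 0"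
  then obtain l where l: "0 < l" "l < k'" "fib_root n k = fib_root k' l"
    using poly_cfib_poly_eq_0_iff[of k'] assms by auto
  have k: "0 < k" "k < n" "coprime k n" using assms(1) by (auto simp: primitive_indices_def)
  hence "k * k' = l * n" using l assms fib_root_eq_iff[of k n l k'] by simp
  hence "n dvd k * k'" by simp
  hence "n dvd k'" using k(3) by (simp add: coprime_dvd_mult_right_iff coprime_commute)
  thus False using assms by (auto dest: dvd_imp_le)
qed

lemma fibotomic_factor_root_primitive:
  assumes n: "2 \<le> n" and p: "p \<in> fibotomic_factors n" "poly (of_int_poly p) z = (0 :: complex)"
  shows "\<exists>k\<in>primitive_indices n. z = fib_root n k"
proof -
  have "poly (cfib_poly n) z = 0"
    using p unfolding cfib_poly_def fibotomic_factors_def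
    by (blast intro: poly_eq_0_if_dvd of_int_poly_hom.hom_dvd)
  then obtain k where k: "0 < k" "k < n" "z = fib_root n k"
    using poly_cfib_poly_eq_0_iff[of n z] n by auto
  have "coprime k n"
  proof (rule ccontr)
    assume "\<not> coprime k n"
    then obtain d where "0 < d" "d < n" "poly (cfib_poly d) z = 0"
      using fib_root_imprimitive[OF k(1,2)] k(3) by blast
    moreover have "irreducible p" using p by (simp add: fibotomic_factors_def)
    ultimately have "p dvd fib_poly d"
      using dvd_of_common_complex_root p(2) unfolding cfib_poly_def by blast
    thus False using p \<open>0 < d\<close> \<open>d < n\<close> by (auto simp: fibotomic_factors_def)
  qed
  thus ?thesis using k by (auto simp: primitive_indices_def)
qed

lemma primitive_fib_root_fibotomic_factor_root:
  assumes n: "2 \<le> n" and k: "k \<in> primitive_indices n"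
  shows "\<exists>p\<in>fibotomic_factors n. poly (of_int_poly p) (fib_root n k) = (0 :: complex)"
proof -
  have "poly (of_int_poly (fib_poly n)) (fib_root n k) = (0 :: complex)"
    using cfib_poly_fib_root[of k n] k by (simp add: primitive_indices_def cfib_poly_def)
  then obtain p where pf: "p \<in> prime_factors (fib_poly n)"
    and pz: "poly (of_int_poly p) (fib_root n k) = 0"
    using complex_root_of_prime_factor fib_poly_degree_monic[of n] n by fastforce
  have "p \<in> fibotomic_factors n"
    unfolding fibotomic_factors_def
  proof (intro CollectI conjI allI impI)
    show "monic p"
      using monic_prime_factor_int_poly[OF _ pf] fib_poly_degree_monic[of n] n by auto
    show "irreducible p" "p dvd fib_poly n"
      using pf by (auto simp: in_prime_factors_iff prime_elem_imp_irreducible)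
    fix k' assume k': "1 \<le> k' \<and> k' < n"
    show "\<not> p dvd fib_poly k'"
    proof
      assume "p dvd fib_poly k'"
      hence "poly (cfib_poly k') (fib_root n k) = 0"
        unfolding cfib_poly_def using pz by (rule poly_eq_0_if_dvd[OF of_int_poly_hom.hom_dvd])
      thus False using fib_root_primitive_not_root[OF k, of k'] k' by auto
    qed
  qed
  thus ?thesis using pz by blast
qed

lemma poly_fibotomic_eq_0_iff:
  assumes n: "2 \<le> n"
  shows "poly (of_int_poly (fibotomic n)) z = (0 :: complex)
           \<longleftrightarrow> (\<exists>k\<in>primitive_indices n. z = fib_root n k)"
proof -
  have "poly (of_int_poly (fibotomic n)) z = (0 :: complex)
          \<longleftrightarrow> (\<exists>p\<in>fibotomic_factors n. poly (of_int_poly p) z = (0 :: complex))"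
    unfolding fibotomic_eq_prod_factors[OF n] of_int_poly_hom.hom_prod poly_prod
    using finite_fibotomic_factors[of n] n by (simp add: prod_zero_iff)
  thus ?thesis
    using fibotomic_factor_root_primitive[OF n] primitive_fib_root_fibotomic_factor_root[OF n]
    by blast
qed

lemma of_int_poly_fibotomic:
  assumes n: "2 \<le> n"
  shows "of_int_poly (fibotomic n) = cfibotomic n"
proof -
  let ?Q = "of_int_poly (fibotomic n) :: complex poly"
  have lQ: "lead_coeff ?Q = 1"
    using n by (simp add: fibotomic_eq_prod_factors lead_coeff_prod fibotomic_factors_def)
  have "?Q dvd cfib_poly n"
    unfolding cfib_poly_def by (rule of_int_poly_hom.hom_dvd[OF fibotomic_dvd_fib_poly[OF n]])
  hence "rsquarefree ?Q" using rsquarefree_cfib_poly[of n] n by (auto intro: rsquarefree_dvd)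
  hence "?Q = (\<Prod>z | poly ?Q z = 0. [:-z, 1:])"
    using complex_poly_decompose_rsquarefree[of ?Q] lQ by simp
  also have "{z. poly ?Q z = 0} = fib_root n ` primitive_indices n"
    using poly_fibotomic_eq_0_iff[OF n] by auto
  also have "(\<Prod>z\<in>fib_root n ` primitive_indices n. [:-z, 1:]) = cfibotomic n"
    using inj_on_subset[OF inj_on_fib_root, of n "primitive_indices n"] n
    by (simp add: prod.reindex cfibotomic_def primitive_indices_def subset_eq)
  finally show ?thesis .
qed

section \<open>Factorisation of \<open>F\<^sub>N\<close> over the divisors of \<open>N\<close>\<close>

definition divisors_ge_2 :: "nat \<Rightarrow> nat set" where
  "divisors_ge_2 N = {d. d dvd N \<and> 2 \<le> d}"

lemma finite_divisors_ge_2: "0 < N \<Longrightarrow> finite (divisors_ge_2 N)"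
  unfolding divisors_ge_2_def by (rule finite_subset[of _ "{..N}"]) (auto dest: dvd_imp_le)

lemma divisors_ge_2_mono: "m dvd N \<Longrightarrow> divisors_ge_2 m \<subseteq> divisors_ge_2 N"
  unfolding divisors_ge_2_def by (auto intro: dvd_trans)

text \<open>Every \<open>0 < k < N\<close> is uniquely \<open>j \<cdot> N/d\<close> with \<open>d = N / gcd k N\<close> and \<open>j\<close> prime to \<open>d\<close>.\<close>
lemma bij_betw_primitive_indices_divisors:
  assumes N: "0 < N"
  shows "bij_betw (\<lambda>(d, j). j * (N div d))
           (Sigma (divisors_ge_2 N) primitive_indices) {0<..<N}"
proof -
  have left: "N div gcd (j * (N div d)) N = d \<and> j * (N div d) div gcd (j * (N div d)) N = j
      \<and> 0 < j * (N div d) \<and> j * (N div d) < N"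
    if d: "d \<in> divisors_ge_2 N" and j: "j \<in> primitive_indices d" for d j
  proof -
    obtain e where e: "N = d * e" using d by (auto simp: divisors_ge_2_def elim: dvdE)
    have "0 < e" "0 < d" using e N by (auto intro: gr0I)
    moreover have "gcd (j * e) N = e"
      using j unfolding e primitive_indices_def
      by (simp add: gcd_mult_distrib_nat[symmetric] mult.commute[of _ e])
    ultimately show ?thesis
      using e j by (auto simp: primitive_indices_def)
  qed
  have right: "N div gcd k N \<in> divisors_ge_2 N \<and> k div gcd k N \<in> primitive_indices (N div gcd k N)
      \<and> k div gcd k N * (N div (N div gcd k N)) = k"
    if k: "k \<in> {0<..<N}" for k
  proof -
    define g where "g = gcd k N"
    obtain d where d: "N = g * d" using gcd_dvd2[of k N] unfolding g_def by (rule dvdE)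
    obtain j where j: "k = g * j" using gcd_dvd1[of k N] unfolding g_def by (rule dvdE)
    have "0 < g" using k by (simp add: g_def)
    hence jd: "N div g = d" "k div g = j" "N div d = g" using d j N by simp_all
    have "coprime (k div g) (N div g)"
      unfolding g_def by (rule div_gcd_coprime) (use k in auto)
    moreover have "0 < j" "j < d" using k d j \<open>0 < g\<close> by (auto intro: gr0I)
    ultimately show ?thesis
      using d j jd unfolding g_def[symmetric]
      by (auto simp: divisors_ge_2_def primitive_indices_def)
  qed
  show ?thesis
    by (rule bij_betw_byWitness[where f' = "\<lambda>k. (N div gcd k N, k div gcd k N)"])
       (use left right in \<open>auto simp: mult.commute\<close>)
qed

lemma cfib_poly_eq_prod_cfibotomic:
  assumes N: "0 < N"
  shows "cfib_poly N = (\<Prod>d\<in>divisors_ge_2 N. cfibotomic d)"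
proof -
  have "cfib_poly N = (\<Prod>k\<in>{0<..<N}. [:- fib_root N k, 1:])"
    by (rule cfib_poly_eq_prod_fib_roots[OF N])
  also have "\<dots> = (\<Prod>x\<in>Sigma (divisors_ge_2 N) primitive_indices.
                     [:- fib_root N ((\<lambda>(d, j). j * (N div d)) x), 1:])"
    by (rule prod.reindex_bij_betw[OF bij_betw_primitive_indices_divisors[OF N], symmetric])
  also have "\<dots> = (\<Prod>(d, j)\<in>Sigma (divisors_ge_2 N) primitive_indices. [:- fib_root d j, 1:])"
  proof (rule prod.cong[OF refl], clarify)
    fix d j assume "d \<in> divisors_ge_2 N" "j \<in> primitive_indices d"
    thus "[:- fib_root N (j * (N div d)), 1:] = [:- fib_root d j, 1:]"
      using N fib_root_scale[of N d "N div d" j]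
      by (auto simp: divisors_ge_2_def primitive_indices_def)
  qed
  also have "\<dots> = (\<Prod>d\<in>divisors_ge_2 N. cfibotomic d)"
    unfolding cfibotomic_def using finite_divisors_ge_2[OF N] by (simp add: prod.Sigma)
  finally show ?thesis .
qed

text \<open>\<open>exp_mangoldt k\<close> is \<open>exp (\<Lambda> k)\<close> for the von Mangoldt function \<open>\<Lambda>\<close>.\<close>
definition exp_mangoldt :: "nat \<Rightarrow> nat" where
  "exp_mangoldt k = (if card (prime_factors k) = 1 then the_elem (prime_factors k) else 1)"

lemma exp_mangoldt_prime_power: "prime p \<Longrightarrow> 0 < i \<Longrightarrow> exp_mangoldt (p ^ i) = p"
  unfolding exp_mangoldt_def by (simp add: prime_factors_power prime_prime_factors)

lemma exp_mangoldt_pos: "0 < exp_mangoldt k"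
proof (cases "card (prime_factors k) = 1")
  case True
  then obtain p where "prime_factors k = {p}" by (auto simp: card_Suc_eq)
  thus ?thesis unfolding exp_mangoldt_def using prime_gt_0_nat[of p] by auto
qed (simp add: exp_mangoldt_def)

lemma exp_mangoldt_neq_1_imp_prime_power:
  assumes "0 < k" "exp_mangoldt k \<noteq> 1"
  obtains p i where "prime p" "0 < i" "k = p ^ i"
proof -
  obtain p where p: "prime_factors k = {p}"
    using assms(2) unfolding exp_mangoldt_def by (auto simp: card_Suc_eq split: if_splits)
  hence "k = p ^ multiplicity p k"
    using prod_prime_factors[of k] assms(1) by simp
  moreover have "prime p" "0 < multiplicity p k"
    using p by (auto simp: prime_factors_multiplicity)
  ultimately show ?thesis using that by blast
qed

lemma prod_exp_mangoldt_divisors: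
  assumes q: "0 < q"
  shows "(\<Prod>e | e dvd q. exp_mangoldt e) = q"
proof -
  define S where "S = Sigma (prime_factors q) (\<lambda>p. {1..multiplicity p q})"
  define h where "h = (\<lambda>(p :: nat, i :: nat). p ^ i)"
  have h_S: "h ` S \<subseteq> {e. e dvd q}"
    by (auto simp: S_def h_def intro: multiplicity_dvd')
  have "(\<Prod>e | e dvd q. exp_mangoldt e) = (\<Prod>e\<in>h ` S. exp_mangoldt e)"
  proof (rule prod.mono_neutral_right[OF finite_divisors_nat[OF q] h_S], rule ballI, rule ccontr)
    fix e assume e: "e \<in> {e. e dvd q} - h ` S" and "exp_mangoldt e \<noteq> 1"
    moreover have "0 < e" using e q by (auto intro: gr0I)
    ultimately obtain p i where pi: "prime p" "0 < i" "e = p ^ i"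
      using exp_mangoldt_neq_1_imp_prime_power by blast
    hence "p ^ i dvd q" using e by simp
    hence "i \<le> multiplicity p q" "p \<in> prime_factors q"
      using q pi dvd_power[of i p] by (auto intro: multiplicity_geI dvd_trans simp: in_prime_factors_iff)
    hence "e \<in> h ` S" unfolding S_def h_def using pi by force
    thus False using e by blast
  qed
  also have "\<dots> = (\<Prod>x\<in>S. exp_mangoldt (h x))"
  proof -
    have "inj_on h S"
    proof (rule inj_onI)
      fix x y assume xy: "x \<in> S" "y \<in> S" "h x = h y"
      obtain p i p' i' where pi: "x = (p, i)" "y = (p', i')" by force
      have "prime p" "prime p'" "0 < i" "0 < i'" "p ^ i = p' ^ i'"
        using xy unfolding pi S_def h_def by (auto dest: in_prime_factors_imp_prime)
      thus "x = y" unfolding pi using prime_power_inj' by blast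
    qed
    thus ?thesis by (simp add: prod.reindex)
  qed
  also have "\<dots> = (\<Prod>(p, i)\<in>S. p)"
    by (rule prod.cong) (auto simp: S_def h_def exp_mangoldt_prime_power in_prime_factors_iff)
  also have "\<dots> = (\<Prod>p\<in>prime_factors q. p ^ multiplicity p q)"
    unfolding S_def by (subst prod.Sigma[symmetric]) auto
  also have "\<dots> = q" using prod_prime_factors[of q] q by simp
  finally show ?thesis .
qed

definition resultant_value :: "nat \<Rightarrow> nat \<Rightarrow> nat" where
  "resultant_value m d =
     (if m dvd d then exp_mangoldt (d div m) ^ totient m
      else if d dvd m then exp_mangoldt (m div d) ^ totient d else 1)"

lemma resultant_value_pos: "0 < resultant_value m d"
  unfolding resultant_value_def using exp_mangoldt_pos by auto

lemma resultant_value_commute: "resultant_value m d = resultant_value d m"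
  unfolding resultant_value_def by (auto dest: dvd_antisym)

lemma prod_resultant_value_gcd:
  assumes N: "0 < N" and "\<not> m dvd N"
  shows "(\<Prod>d\<in>divisors_ge_2 N. resultant_value m d)
           = (\<Prod>d\<in>divisors_ge_2 (gcd N m). resultant_value m d)"
proof (rule prod.mono_neutral_right[OF finite_divisors_ge_2[OF N]])
  show "divisors_ge_2 (gcd N m) \<subseteq> divisors_ge_2 N" by (rule divisors_ge_2_mono) simp
  show "\<forall>d\<in>divisors_ge_2 N - divisors_ge_2 (gcd N m). resultant_value m d = 1"
    using assms(2) by (auto simp: divisors_ge_2_def resultant_value_def intro: dvd_trans)
qed

lemma prod_resultant_value_mod:
  assumes "0 < m" "0 < N" "\<not> m dvd N"
  shows "(\<Prod>d\<in>divisors_ge_2 N. resultant_value m d)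
           = (\<Prod>d\<in>divisors_ge_2 (N mod m). resultant_value m d)"
proof -
  have r: "0 < N mod m" "\<not> m dvd N mod m"
    using assms by (auto simp: mod_eq_0_iff_dvd[symmetric] dest: dvd_imp_le)
  have "gcd (N mod m) m = gcd N m" using assms(1) by (simp add: gcd_mod_left)
  thus ?thesis using prod_resultant_value_gcd[OF assms(2,3)] prod_resultant_value_gcd[OF r] by simp
qed

lemma prod_resultant_value_multiple:
  assumes m: "2 \<le> m" and q: "0 < q"
  shows "(\<Prod>d\<in>divisors_ge_2 (q * m) - divisors_ge_2 m. resultant_value m d) = q ^ totient m"
proof -
  define E where "E = {e. e dvd q \<and> e \<noteq> 1}"
  have E_S: "(\<lambda>e. e * m) ` E \<subseteq> divisors_ge_2 (q * m) - divisors_ge_2 m"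
  proof safe
    fix e assume e: "e \<in> E"
    hence "2 \<le> e" using q by (auto simp: E_def intro: gr0I)
    hence "m < e * m" using m by simp
    hence "2 \<le> e * m" using m by linarith
    thus "e * m \<in> divisors_ge_2 (q * m)" "e * m \<in> divisors_ge_2 m \<Longrightarrow> False"
      using e m by (auto simp: E_def divisors_ge_2_def dest: dvd_imp_le)
  qed
  have "(\<Prod>d\<in>divisors_ge_2 (q * m) - divisors_ge_2 m. resultant_value m d)
      = (\<Prod>d\<in>(\<lambda>e. e * m) ` E. resultant_value m d)"
  proof (rule prod.mono_neutral_right[OF _ E_S])
    show "finite (divisors_ge_2 (q * m) - divisors_ge_2 m)"
      using finite_divisors_ge_2[of "q * m"] m q by simp
  next
    show "\<forall>d\<in>divisors_ge_2 (q * m) - divisors_ge_2 m - (\<lambda>e. e * m) ` E. resultant_value m d = 1"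
    proof
      fix d assume d: "d \<in> divisors_ge_2 (q * m) - divisors_ge_2 m - (\<lambda>e. e * m) ` E"
      have "\<not> m dvd d"
      proof
        assume "m dvd d"
        then obtain e where e: "d = e * m" by (metis dvd_def mult.commute)
        hence "e \<in> E" using d m by (auto simp: E_def divisors_ge_2_def)
        thus False using d e by blast
      qed
      thus "resultant_value m d = 1" using d by (auto simp: resultant_value_def divisors_ge_2_def)
    qed
  qed
  also have "\<dots> = (\<Prod>e\<in>E. exp_mangoldt e) ^ totient m"
    using m by (subst prod.reindex) (auto intro: inj_onI simp: resultant_value_def prod_power_distrib)
  also have "(\<Prod>e\<in>E. exp_mangoldt e) = (\<Prod>e | e dvd q. exp_mangoldt e)"
    by (rule prod.mono_neutral_left[OF finite_divisors_nat[OF q]])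
       (auto simp: E_def exp_mangoldt_def)
  finally show ?thesis using prod_exp_mangoldt_divisors[OF q] by simp
qed

section \<open>Fibonacci polynomials at the roots of \<open>\<Psi>\<^sub>m\<close>\<close>

lemma norm_poly_cfib_poly_fib_root:
  assumes "0 < j" "j < m"
  shows "cmod (poly (cfib_poly N) (fib_root m j))
           = \<bar>sin (real N * (real j * pi / real m))\<bar> / sin (real j * pi / real m)"
proof -
  have s: "0 < sin (real j * pi / real m)" by (rule sin_pos_fraction_pi[OF assms])
  have "cmod (poly (cfib_poly N) (fib_root m j)) * sin (real j * pi / real m)
          = \<bar>sin (real N * (real j * pi / real m))\<bar>"
    using arg_cong[OF poly_cfib_poly_fib_root[of N m j], of cmod] s
    by (simp add: norm_mult norm_power)
  thus ?thesis using s by (simp add: field_simps)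
qed

lemma norm_poly_cfib_poly_mod:
  assumes "0 < j" "j < m"
  shows "cmod (poly (cfib_poly N) (fib_root m j)) = cmod (poly (cfib_poly (N mod m)) (fib_root m j))"
proof -
  define x where "x = real (N mod m) * (real j * pi / real m)"
  define k where "k = N div m * j"
  have "real N = real (N div m) * real m + real (N mod m)"
    by (metis div_mult_mod_eq of_nat_add of_nat_mult)
  hence "real N * (real j * pi / real m) = x + real k * pi"
    using assms by (simp add: x_def k_def field_simps)
  moreover have "sin (x + real k * pi) = (-1) ^ k * sin x" by (simp add: sin_add)
  ultimately have "\<bar>sin (real N * (real j * pi / real m))\<bar> = \<bar>sin x\<bar>"
    by (simp add: abs_mult)
  thus ?thesis by (simp add: norm_poly_cfib_poly_fib_root[OF assms] x_def)
qed

lemma poly_cfib_poly_Suc_fib_root: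
  assumes "0 < j" "j < m"
  shows "poly (cfib_poly (Suc m)) (fib_root m j) = \<i> ^ m * (-1) ^ j"
proof -
  have "real (Suc m) * (real j * pi / real m) = real j * pi / real m + real j * pi"
    using assms by (simp add: field_simps)
  hence "poly (cfib_poly (Suc m)) (fib_root m j) * of_real (sin (real j * pi / real m))
       = \<i> ^ m * (-1) ^ j * of_real (sin (real j * pi / real m))"
    using poly_cfib_poly_fib_root[of "Suc m" m j] by (simp add: sin_add)
  thus ?thesis using sin_pos_fraction_pi[OF assms] by simp
qed

lemma poly_cfib_poly_pred_mult_fib_root:
  assumes "0 < j" "j < m" "0 < q"
  shows "poly (cfib_poly (q * m - 1)) (fib_root m j) = (\<i> ^ m * (-1) ^ j) ^ q"
proof -
  define x where "x = real j * pi / real m"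
  define k where "k = q * j"
  have "m \<le> q * m" using assms by simp
  hence qm: "2 \<le> q * m" using assms by linarith
  have "real (q * m - 1) * x = real k * pi - x"
    using assms qm by (simp add: x_def k_def field_simps of_nat_diff)
  hence "poly (cfib_poly (q * m - 1)) (fib_root m j) * of_real (sin x)
       = \<i> ^ (q * m - 1 - 1) * of_real (- ((-1) ^ k * sin x))"
    using poly_cfib_poly_fib_root[of "q * m - 1" m j] unfolding x_def[symmetric]
    by (simp add: sin_diff)
  moreover have "q * m = (q * m - 1 - 1) + 2" using qm by simp
  hence "\<i> ^ (q * m) = \<i> ^ (q * m - 1 - 1) * \<i> ^ 2"
    by (simp only: power_add[symmetric])
  ultimately have "poly (cfib_poly (q * m - 1)) (fib_root m j) * of_real (sin x)
      = \<i> ^ (q * m) * (-1) ^ k * of_real (sin x)"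
    by (simp add: mult.assoc)
  moreover have "sin x \<noteq> 0" using sin_pos_fraction_pi[OF assms(1,2)] by (simp add: x_def)
  ultimately have "poly (cfib_poly (q * m - 1)) (fib_root m j) = \<i> ^ (q * m) * (-1) ^ k"
    by simp
  thus ?thesis by (simp add: k_def power_mult_distrib power_mult mult.commute)
qed

definition root_distance_prod :: "nat \<Rightarrow> nat \<Rightarrow> real" where
  "root_distance_prod m d =
     (\<Prod>j\<in>primitive_indices m. \<Prod>k\<in>primitive_indices d. cmod (fib_root m j - fib_root d k))"

lemma root_distance_prod_commute: "root_distance_prod m d = root_distance_prod d m"
  unfolding root_distance_prod_def by (subst prod.swap) (simp add: norm_minus_commute)

lemma prod_norm_poly_prod_cfibotomic:
  assumes "finite D"
  shows "(\<Prod>j\<in>primitive_indices m. cmod (poly (\<Prod>d\<in>D. cfibotomic d) (fib_root m j)))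
           = (\<Prod>d\<in>D. root_distance_prod m d)"
  unfolding root_distance_prod_def
  by (simp add: poly_prod poly_cfibotomic prod_norm[symmetric] prod.swap[of _ D])

lemma prod_root_distance_prod_mod:
  assumes "0 < N" "\<not> m dvd N"
  shows "(\<Prod>d\<in>divisors_ge_2 N. root_distance_prod m d)
           = (\<Prod>d\<in>divisors_ge_2 (N mod m). root_distance_prod m d)"
proof -
  have r: "0 < N mod m" using assms(2) by (simp add: mod_eq_0_iff_dvd[symmetric] del: mod_eq_0_iff_dvd)
  have "(\<Prod>d\<in>divisors_ge_2 N. root_distance_prod m d)
      = (\<Prod>j\<in>primitive_indices m. cmod (poly (cfib_poly N) (fib_root m j)))"
    unfolding cfib_poly_eq_prod_cfibotomic[OF assms(1)]
    by (rule prod_norm_poly_prod_cfibotomic[symmetric, OF finite_divisors_ge_2[OF assms(1)]])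
  also have "\<dots> = (\<Prod>j\<in>primitive_indices m. cmod (poly (cfib_poly (N mod m)) (fib_root m j)))"
    by (rule prod.cong[OF refl]) (auto simp: primitive_indices_def intro: norm_poly_cfib_poly_mod)
  also have "\<dots> = (\<Prod>d\<in>divisors_ge_2 (N mod m). root_distance_prod m d)"
    unfolding cfib_poly_eq_prod_cfibotomic[OF r]
    by (rule prod_norm_poly_prod_cfibotomic[OF finite_divisors_ge_2[OF r]])
  finally show ?thesis .
qed

text \<open>The quotient \<open>H\<^sub>q = F\<^sub>q\<^sub>m / F\<^sub>m\<close>. The addition formula gives \<open>H\<^sub>q\<^sub>+\<^sub>1 = F\<^sub>m\<^sub>+\<^sub>1 H\<^sub>q + F\<^sub>q\<^sub>m\<^sub>-\<^sub>1\<close>,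
  and at a root of \<open>\<Psi>\<^sub>m\<close> both \<open>F\<^sub>m\<^sub>+\<^sub>1\<close> and \<open>F\<^sub>q\<^sub>m\<^sub>-\<^sub>1\<close> are powers of the same unit.\<close>
definition cfib_quotient :: "nat \<Rightarrow> nat \<Rightarrow> complex poly" where
  "cfib_quotient m q = (\<Prod>d\<in>divisors_ge_2 (q * m) - divisors_ge_2 m. cfibotomic d)"

lemma cfib_poly_mult_eq:
  assumes "0 < m" "0 < q"
  shows "cfib_poly (q * m) = cfib_poly m * cfib_quotient m q"
proof -
  have qm: "0 < q * m" using assms by simp
  have "cfib_poly (q * m) = (\<Prod>d\<in>divisors_ge_2 (q * m). cfibotomic d)"
    by (rule cfib_poly_eq_prod_cfibotomic[OF qm])
  also have "\<dots> = cfib_quotient m q * (\<Prod>d\<in>divisors_ge_2 m. cfibotomic d)"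
    unfolding cfib_quotient_def
    by (rule prod.subset_diff) (simp_all add: divisors_ge_2_mono finite_divisors_ge_2[OF qm])
  also have "(\<Prod>d\<in>divisors_ge_2 m. cfibotomic d) = cfib_poly m"
    by (rule cfib_poly_eq_prod_cfibotomic[OF assms(1), symmetric])
  finally show ?thesis by (simp add: mult.commute)
qed

lemma cfib_quotient_Suc:
  assumes "0 < m" "0 < q"
  shows "cfib_quotient m (Suc q) = cfib_poly (Suc m) * cfib_quotient m q + cfib_poly (q * m - 1)"
proof -
  have qm: "Suc (q * m - 1) = q * m" using assms by simp
  have "cfib_poly m * cfib_quotient m (Suc q) = cfib_poly (m + Suc (q * m - 1))"
    using cfib_poly_mult_eq[of m "Suc q"] assms qm by simp
  also have "\<dots> = cfib_poly (Suc m) * cfib_poly (Suc (q * m - 1)) + cfib_poly m * cfib_poly (q * m - 1)"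
    by (rule cfib_poly_add)
  also have "\<dots> = cfib_poly m * (cfib_poly (Suc m) * cfib_quotient m q + cfib_poly (q * m - 1))"
    unfolding qm cfib_poly_mult_eq[OF assms] by (simp add: algebra_simps)
  finally show ?thesis using cfib_poly_nonzero[OF assms(1)] by simp
qed

lemma poly_cfib_quotient_fib_root:
  assumes j: "0 < j" "j < m" and "0 < q"
  shows "poly (cfib_quotient m q) (fib_root m j) = of_nat q * (\<i> ^ m * (-1) ^ j) ^ (q - 1)"
  using \<open>0 < q\<close>
proof (induction q rule: nat_induct_non_zero)
  case 1
  thus ?case by (simp add: cfib_quotient_def)
next
  case (Suc q)
  let ?e = "\<i> ^ m * (-1) ^ j :: complex"
  have m: "0 < m" using j by simp
  have "poly (cfib_quotient m (Suc q)) (fib_root m j) = ?e * (of_nat q * ?e ^ (q - 1)) + ?e ^ q"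
    unfolding cfib_quotient_Suc[OF m Suc.hyps] poly_add poly_mult Suc.IH
      poly_cfib_poly_Suc_fib_root[OF j] poly_cfib_poly_pred_mult_fib_root[OF j Suc.hyps] ..
  also have "?e * (of_nat q * ?e ^ (q - 1)) = of_nat q * (?e * ?e ^ (q - 1))"
    by (rule mult.left_commute)
  also have "?e * ?e ^ (q - 1) = ?e ^ q"
    using Suc.hyps by (simp flip: power_Suc)
  finally show ?case by (simp add: algebra_simps)
qed

lemma prod_root_distance_prod_multiple:
  assumes m: "2 \<le> m" and q: "0 < q"
  shows "(\<Prod>d\<in>divisors_ge_2 (q * m) - divisors_ge_2 m. root_distance_prod m d) = real q ^ totient m"
proof -
  have "(\<Prod>d\<in>divisors_ge_2 (q * m) - divisors_ge_2 m. root_distance_prod m d)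
      = (\<Prod>j\<in>primitive_indices m. cmod (poly (cfib_quotient m q) (fib_root m j)))"
    unfolding cfib_quotient_def using m q
    by (intro prod_norm_poly_prod_cfibotomic[symmetric]) (simp add: finite_divisors_ge_2)
  also have "\<dots> = (\<Prod>j\<in>primitive_indices m. real q)"
    using q by (intro prod.cong)
       (auto simp: primitive_indices_def poly_cfib_quotient_fib_root norm_mult norm_power)
  finally show ?thesis using card_primitive_indices[OF m] by simp
qed

lemma prod_imaginary_antisymmetric_involution:
  fixes f :: "'a \<Rightarrow> complex"
  assumes "finite A"
    and "\<And>x. x \<in> A \<Longrightarrow> \<sigma> x \<in> A" "\<And>x. x \<in> A \<Longrightarrow> \<sigma> x \<noteq> x" "\<And>x. x \<in> A \<Longrightarrow> \<sigma> (\<sigma> x) = x"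
    and "\<And>x. x \<in> A \<Longrightarrow> f (\<sigma> x) = - f x" "\<And>x. x \<in> A \<Longrightarrow> Re (f x) = 0"
  shows "\<exists>R\<ge>0. (\<Prod>x\<in>A. f x) = of_real R"
  using assms
proof (induction "card A" arbitrary: A rule: less_induct)
  case less
  show ?case
  proof (cases "A = {}")
    case False
    then obtain x where x: "x \<in> A" by blast
    define A' where "A' = A - {x, \<sigma> x}"
    have A: "A = insert x (insert (\<sigma> x) A')" "x \<notin> insert (\<sigma> x) A'" "\<sigma> x \<notin> A'"
      using x less.prems(2,3)[OF x] by (auto simp: A'_def)
    have "card A' < card A" using x less.prems(1) by (auto simp: A'_def intro: psubset_card_mono)
    moreover have "\<sigma> y \<in> A'" if "y \<in> A'" for y
    proof -
      have "y \<in> A" "y \<noteq> x" "y \<noteq> \<sigma> x" using that by (auto simp: A'_def)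
      moreover have "\<sigma> (\<sigma> y) = y" "\<sigma> (\<sigma> x) = x" using less.prems(4) x calculation(1) by auto
      ultimately show ?thesis using less.prems(2) by (auto simp: A'_def)
    qed
    ultimately obtain R where R: "R \<ge> 0" "(\<Prod>y\<in>A'. f y) = of_real R"
      using less.hyps[of A'] less.prems by (auto simp: A'_def)
    have "f x * f (\<sigma> x) = of_real ((Im (f x))\<^sup>2)"
      using less.prems(5,6)[OF x] by (simp add: complex_eq_iff power2_eq_square)
    moreover have "(\<Prod>y\<in>A. f y) = f x * f (\<sigma> x) * (\<Prod>y\<in>A'. f y)"
      using less.prems(1) A(2,3) by (subst A(1)) (simp add: A'_def mult.assoc)
    ultimately have "(\<Prod>y\<in>A. f y) = of_real ((Im (f x))\<^sup>2 * R)"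
      using R(2) by simp
    thus ?thesis using R(1) by (intro exI[of _ "(Im (f x))\<^sup>2 * R"]) simp
  qed (auto intro: exI[of _ 1])
qed

lemma prod_fib_root_differences_nonneg:
  assumes "3 \<le> n"
  shows "\<exists>R\<ge>0. (\<Prod>j\<in>primitive_indices m. \<Prod>k\<in>primitive_indices n. fib_root m j - fib_root n k)
                   = of_real R"
proof -
  have no_fixpoint: "n - k \<noteq> k" if "k \<in> primitive_indices n" for k
  proof
    assume "n - k = k"
    hence "n = k * 2" "0 < k" "coprime k n" using that by (auto simp: primitive_indices_def)
    hence "k dvd n" "0 < k" "coprime k n" by simp_all
    hence "k = 1" by (metis coprime_iff_gcd_eq_1 gcd_nat.absorb1)
    thus False using \<open>n - k = k\<close> assms by simp
  qed
  have imaginary: "Re (fib_root n k) = 0" for n k by (simp add: fib_root_def)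
  have reflect: "n - k \<in> primitive_indices n" if "k \<in> primitive_indices n" for n k
    using that gcd_diff2_nat[of k n] by (auto simp: primitive_indices_def coprime_iff_gcd_eq_1 gcd.commute)
  have "(\<Prod>j\<in>primitive_indices m. \<Prod>k\<in>primitive_indices n. fib_root m j - fib_root n k)
      = (\<Prod>(j, k)\<in>primitive_indices m \<times> primitive_indices n. fib_root m j - fib_root n k)"
    by (rule prod.cartesian_product)
  also have "\<exists>R\<ge>0. \<dots> = of_real R"
    by (rule prod_imaginary_antisymmetric_involution[where \<sigma> = "\<lambda>(j, k). (m - j, n - k)"])
       (use no_fixpoint reflect in \<open>auto simp: primitive_indices_def fib_root_reflect imaginary\<close>)
  finally show ?thesis .
qed

lemma prod_mset_sum_singletons:
  "finite A \<Longrightarrow> (\<Prod>a\<in>#(\<Sum>j\<in>A. {#r j#}). f a) = (\<Prod>j\<in>A. f (r j))"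
  by (induction A rule: finite_induct) auto

lemma prod_eq_imp_eq_at:
  fixes f g :: "'a \<Rightarrow> 'b :: field"
  assumes "finite S" "n \<in> S" "prod f S = prod g S"
    and "\<And>d. d \<in> S - {n} \<Longrightarrow> f d = g d" "\<And>d. d \<in> S \<Longrightarrow> g d \<noteq> 0"
  shows "f n = g n"
proof -
  have "prod f (S - {n}) = prod g (S - {n})" using assms(4) by (rule prod.cong[OF refl])
  moreover have "prod g (S - {n}) \<noteq> 0" using assms(1,5) by (simp add: prod_zero_iff)
  ultimately show ?thesis
    using assms(3) prod.remove[OF assms(1,2), of f] prod.remove[OF assms(1,2), of g] by simp
qed

lemma prod_root_distance_prod_eq_not_dvd:
  assumes m: "2 \<le> m" and n: "0 < n" "\<not> m dvd n"
    and IH: "\<And>d. 2 \<le> d \<Longrightarrow> d < m \<Longrightarrow> root_distance_prod m d = real (resultant_value m d)"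
  shows "(\<Prod>d\<in>divisors_ge_2 n. root_distance_prod m d)
           = (\<Prod>d\<in>divisors_ge_2 n. real (resultant_value m d))"
proof -
  let ?r = "n mod m"
  have r: "0 < ?r" "?r < m" using n m by (auto intro: gr0I)
  have "(\<Prod>d\<in>divisors_ge_2 ?r. root_distance_prod m d)
      = (\<Prod>d\<in>divisors_ge_2 ?r. real (resultant_value m d))"
  proof (rule prod.cong[OF refl])
    fix d assume "d \<in> divisors_ge_2 ?r"
    hence "2 \<le> d" "d \<le> ?r" using dvd_imp_le[of d ?r] r(1) by (auto simp: divisors_ge_2_def)
    thus "root_distance_prod m d = real (resultant_value m d)" using IH r(2) by simp
  qed
  thus ?thesis
    using prod_root_distance_prod_mod[OF n] prod_resultant_value_mod[of m n] m n
    by (simp flip: of_nat_prod)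
qed

lemma root_distance_prod_eq_resultant_value:
  "2 \<le> m \<Longrightarrow> m < n \<Longrightarrow> root_distance_prod m n = real (resultant_value m n)"
proof (induction n arbitrary: m rule: less_induct)
  case (less n m)
  have m: "2 \<le> m" "m < n" and n: "0 < n" using less.prems by auto
  have IH: "root_distance_prod m d = real (resultant_value m d)" if d: "2 \<le> d" "d < n" "d \<noteq> m" for d
  proof (cases "m < d")
    case True
    thus ?thesis using less.IH[OF d(2) m(1)] by simp
  next
    case False
    hence "d < m" using d(3) by simp
    hence "root_distance_prod d m = real (resultant_value d m)" using less.IH[OF m(2) d(1)] by simp
    thus ?thesis using root_distance_prod_commute[of m d] resultant_value_commute[of m d] by simp
  qed
  obtain S where S: "S \<subseteq> divisors_ge_2 n" "n \<in> S" "m \<notin> S"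
    and eq: "(\<Prod>d\<in>S. root_distance_prod m d) = (\<Prod>d\<in>S. real (resultant_value m d))"
  proof (cases "m dvd n")
    case True
    then obtain q where "n = m * q" by (rule dvdE)
    hence q: "n = q * m" "0 < q" using n by (auto simp: mult.commute intro: gr0I)
    show thesis
    proof (rule that[of "divisors_ge_2 n - divisors_ge_2 m"])
      show "n \<in> divisors_ge_2 n - divisors_ge_2 m" "m \<notin> divisors_ge_2 n - divisors_ge_2 m"
        using m by (auto simp: divisors_ge_2_def dest: dvd_imp_le)
      show "(\<Prod>d\<in>divisors_ge_2 n - divisors_ge_2 m. root_distance_prod m d)
          = (\<Prod>d\<in>divisors_ge_2 n - divisors_ge_2 m. real (resultant_value m d))"
        using prod_root_distance_prod_multiple[OF m(1) q(2)]
          prod_resultant_value_multiple[OF m(1) q(2)]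
        by (simp add: q(1) flip: of_nat_prod)
    qed auto
  next
    case False
    show thesis
      by (rule that[of "divisors_ge_2 n"])
         (use m n False IH prod_root_distance_prod_eq_not_dvd[OF m(1) n False]
           in \<open>auto simp: divisors_ge_2_def\<close>)
  qed
  show ?case
  proof (rule prod_eq_imp_eq_at[OF finite_subset[OF S(1) finite_divisors_ge_2[OF n]] S(2) eq])
    fix d assume d: "d \<in> S - {n}"
    hence "d dvd n" "2 \<le> d" "d \<noteq> n" "d \<noteq> m" using S by (auto simp: divisors_ge_2_def)
    moreover have "d \<le> n" using dvd_imp_le[OF \<open>d dvd n\<close> n] .
    ultimately show "root_distance_prod m d = real (resultant_value m d)" using IH by simp
  qed (use resultant_value_pos in auto)
qed

lemma resultant_fibotomic:
  assumes m: "2 \<le> m" and mn: "m < n"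
  shows "resultant (fibotomic m) (fibotomic n) = int (resultant_value m n)"
proof -
  let ?T = "\<Prod>j\<in>primitive_indices m. \<Prod>k\<in>primitive_indices n. fib_root m j - fib_root n k"
  have "lead_coeff (cfibotomic m) = 1" by (simp add: cfibotomic_def lead_coeff_prod)
  moreover have "cfibotomic m \<noteq> 0" using calculation by auto
  moreover have "proots (cfibotomic m) = (\<Sum>j\<in>primitive_indices m. proots [:- fib_root m j, 1:])"
    unfolding cfibotomic_def by (rule proots_prod) simp
  hence "proots (cfibotomic m) = (\<Sum>j\<in>primitive_indices m. {#fib_root m j#})"
    by (simp only: proots_linear_factor minus_minus)
  ultimately have "resultant (cfibotomic m) (cfibotomic n)
      = (\<Prod>j\<in>primitive_indices m. poly (cfibotomic n) (fib_root m j))"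
    using resultant_eq_prod_proots[of "cfibotomic m"] by (auto simp: prod_mset_sum_singletons)
  hence "complex_of_int (resultant (fibotomic m) (fibotomic n)) = ?T"
    using m mn by (simp add: of_int_hom.resultant_hom[symmetric] of_int_poly_fibotomic poly_cfibotomic)
  moreover obtain R where "R \<ge> 0" "?T = of_real R"
    using prod_fib_root_differences_nonneg[of n m] m mn by auto
  moreover have "cmod ?T = real (resultant_value m n)"
    using root_distance_prod_eq_resultant_value[OF m mn]
    by (simp add: root_distance_prod_def prod_norm)
  ultimately have "complex_of_int (resultant (fibotomic m) (fibotomic n))
      = complex_of_int (int (resultant_value m n))"
    by simp
  thus ?thesis by (simp only: of_int_eq_iff)
qed

lemma resultant_value_mult_prime_power:
  "0 < m \<Longrightarrow> prime p \<Longrightarrow> 0 < \<alpha> \<Longrightarrow> resultant_value m (m * p ^ \<alpha>) = p ^ totient m"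
  by (simp add: resultant_value_def exp_mangoldt_prime_power)

lemma resultant_value_eq_1:
  assumes "0 < m" "m < n" "\<nexists>p \<alpha>. prime p \<and> 0 < \<alpha> \<and> n = m * p ^ \<alpha>"
  shows "resultant_value m n = 1"
proof (cases "m dvd n")
  case True
  then obtain q where q: "n = m * q" by (rule dvdE)
  hence "0 < q" using assms(2) by (auto intro: gr0I)
  have "exp_mangoldt q = 1"
    using exp_mangoldt_neq_1_imp_prime_power[OF \<open>0 < q\<close>] assms(3) q by blast
  thus ?thesis using assms(1) q by (simp add: resultant_value_def)
next
  case False
  moreover have "\<not> n dvd m" using assms(1,2) by (auto dest: dvd_imp_le)
  ultimately show ?thesis by (simp add: resultant_value_def)
qed

theorem mainTheorem10:
  fixes m n :: nat
  assumes "2 \<le> m" and "m < n"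
  shows "(\<exists>p \<alpha>. prime p \<and> \<alpha> > 0 \<and> n = m * p ^ \<alpha> \<and>
            resultant (fibotomic m) (fibotomic n) = int p ^ totient m)
       \<or> ((\<nexists>p \<alpha>. prime p \<and> \<alpha> > 0 \<and> n = m * p ^ \<alpha>) \<and>
            resultant (fibotomic m) (fibotomic n) = 1)"
proof (cases "\<exists>p \<alpha>. prime p \<and> \<alpha> > 0 \<and> n = m * p ^ \<alpha>")
  case True
  then obtain p \<alpha> where p: "prime p" "\<alpha> > 0" "n = m * p ^ \<alpha>" by blast
  hence "resultant (fibotomic m) (fibotomic n) = int p ^ totient m"
    using resultant_fibotomic[OF assms] resultant_value_mult_prime_power[of m p \<alpha>] assms(1)
    by simp
  thus ?thesis using p by blast
next
  case False
  hence "resultant (fibotomic m) (fibotomic n) = 1"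
    using resultant_fibotomic[OF assms] resultant_value_eq_1[of m n] assms by simp
  thus ?thesis using False by blast
qed

end
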